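(* Let $k$ be a positive-definite kernel on $\mathcal X$ and $l$ a positive-definite kernel on $\mathcal Y$ with $\sup_xk(x,x)\le\nu_k$ and $\sup_yl(y,y)\le\nu_l$. Then for $\delta\in(0,1)$, with probability at least $1-\delta$, $|\hat\sigma^2-\mathbb E\hat\sigma^2|\le6144\nu_k^2\nu_l^2\sqrt{\frac2n\log\frac2\delta}$.
   Context: $(X_1,Y_1),\dots,(X_n,Y_n)$, $n\ge4$, i.i.d. from $P_{xy}$. $K_{ab}=k(X_a,X_b)$, $L_{ab}=l(Y_a,Y_b)$, and for distinct indices $H_{ijqr}=\frac1{24}\sum_{(a,b,c,d)}K_{ab}(L_{ab}+L_{cd}-2L_{ac})$ over all $24$ orderings of $\{i,j,q,r\}$. With $(n)_k=n!/(n-k)!$, $\mathbf i^n_k$ the $k$-tuples of distinct elements of $\{1,\dots,n\}$, and $\mathbf i^n_3\setminus\{i\}$ those avoiding $i$: $\hat\eta=\frac1{(n)_4}\sum_{\mathbf i^n_4}H_{ijqr}$ and $\hat\sigma^2=16\Bigl(\frac1{(n)_4(n-1)_3}\sum_{(i,j,q,r)\in\mathbf i^n_4}\sum_{(b,c,d)\in\mathbf i^n_3\setminus\{i\}}H_{ijqr}H_{ibcd}-\hat\eta^2\Bigr)$. *)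

theory Defs
  imports "HOL-Probability.Probability"
begin

definition pd_kernel :: "('a \<Rightarrow> 'a \<Rightarrow> real) \<Rightarrow> bool" where
  "pd_kernel k \<longleftrightarrow> (\<forall>x y. k x y = k y x) \<and>
     (\<forall>(xs::'a list) (c::nat \<Rightarrow> real).
        0 \<le> (\<Sum>i<length xs. \<Sum>j<length xs. c i * c j * k (xs ! i) (xs ! j)))"

definition falling :: "nat \<Rightarrow> nat \<Rightarrow> real" where
  "falling n m = fact n / fact (n - m)"

definition dtuples :: "nat \<Rightarrow> nat set \<Rightarrow> nat list set" where
  "dtuples m A = {xs. length xs = m \<and> distinct xs \<and> set xs \<subseteq> A}"

text \<open>The kernel h of the HSIC U-statistic; Z is the sample (X_a, Y_a).\<close>
definition Hker :: "('x \<Rightarrow> 'x \<Rightarrow> real) \<Rightarrow> ('y \<Rightarrow> 'y \<Rightarrow> real) \<Rightarrow> (nat \<Rightarrow> 'x \<times> 'y)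
    \<Rightarrow> nat \<Rightarrow> nat \<Rightarrow> nat \<Rightarrow> nat \<Rightarrow> real" where
  "Hker k l Z i j q r =
     (let K = (\<lambda>a b. k (fst (Z a)) (fst (Z b)));
          L = (\<lambda>a b. l (snd (Z a)) (snd (Z b)))
      in (1/24) * (\<Sum>p\<in>dtuples 4 {i, j, q, r}.
            K (p!0) (p!1) * (L (p!0) (p!1) + L (p!2) (p!3) - 2 * L (p!0) (p!2))))"

definition eta_hat :: "('x \<Rightarrow> 'x \<Rightarrow> real) \<Rightarrow> ('y \<Rightarrow> 'y \<Rightarrow> real) \<Rightarrow> nat \<Rightarrow> (nat \<Rightarrow> 'x \<times> 'y) \<Rightarrow> real" where
  "eta_hat k l n Z = (1 / falling n 4) *
     (\<Sum>p\<in>dtuples 4 {1..n}. Hker k l Z (p!0) (p!1) (p!2) (p!3))"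

definition sigma2_hat :: "('x \<Rightarrow> 'x \<Rightarrow> real) \<Rightarrow> ('y \<Rightarrow> 'y \<Rightarrow> real) \<Rightarrow> nat \<Rightarrow> (nat \<Rightarrow> 'x \<times> 'y) \<Rightarrow> real" where
  "sigma2_hat k l n Z = 16 *
     ((1 / (falling n 4 * falling (n - 1) 3)) *
        (\<Sum>p\<in>dtuples 4 {1..n}. \<Sum>t\<in>dtuples 3 ({1..n} - {p!0}).
            Hker k l Z (p!0) (p!1) (p!2) (p!3) * Hker k l Z (p!0) (t!0) (t!1) (t!2))
      - (eta_hat k l n Z)\<^sup>2)"

end

theory Submission
  imports Defs
begin

(*
  Every summand of sigma2_hat is a product of values of the kernel h = Hker, and |h| <= 4 nu_k nu_l
  because a positive-definite kernel satisfies |k x y| <= sup_x k x x.  Replacing the sample point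
  Z_m only affects the summands whose index tuples contain m: at most a fraction 4/n of the
  quadruples and 8/n of the (quadruple, triple) pairs.  Hence sigma2_hat has bounded differences
  c = 512 (4 nu_k nu_l)^2 / n, and McDiarmid's inequality -- proved from Hoeffding's lemma by
  integrating out one coordinate at a time -- bounds its deviation from the mean by
  c sqrt (n/2 ln (2/delta)) = 4096 nu_k^2 nu_l^2 sqrt (2/n ln (2/delta)) with probability 1 - delta.
*)

section \<open>McDiarmid's inequality\<close>

definition has_bounded_differences ::
    "'a measure \<Rightarrow> 'i set \<Rightarrow> (('i \<Rightarrow> 'a) \<Rightarrow> real) \<Rightarrow> real \<Rightarrow> bool" where
  "has_bounded_differences M I f c \<longleftrightarrow>
     (\<forall>x\<in>space (PiM I (\<lambda>_. M)). \<forall>i\<in>I. \<forall>y\<in>space M. \<bar>f x - f (x(i := y))\<bar> \<le> c)"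

lemma has_bounded_differencesD:
  "has_bounded_differences M I f c \<Longrightarrow> x \<in> space (PiM I (\<lambda>_. M)) \<Longrightarrow> i \<in> I \<Longrightarrow> y \<in> space M
    \<Longrightarrow> \<bar>f x - f (x(i := y))\<bar> \<le> c"
  unfolding has_bounded_differences_def by blast

lemma bounded_differences_dist_le:
  fixes f :: "('i \<Rightarrow> 'a) \<Rightarrow> real" and c :: real
  assumes "finite I" "has_bounded_differences M I f c"
    and x: "x \<in> space (PiM I (\<lambda>_. M))" and y: "y \<in> space (PiM I (\<lambda>_. M))"
  shows "\<bar>f x - f y\<bar> \<le> card I * c"
proof -
  define z where "z J = (\<lambda>i. if i \<in> J then y i else x i)" for J
  have "z J \<in> space (PiM I (\<lambda>_. M)) \<and> \<bar>f x - f (z J)\<bar> \<le> card J * c" if "J \<subseteq> I" for J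
    using finite_subset[OF that assms(1)] that
  proof (induction J rule: finite_induct)
    case empty
    then show ?case using x by (simp add: z_def)
  next
    case (insert j J)
    then have z_J: "z J \<in> space (PiM I (\<lambda>_. M))" "\<bar>f x - f (z J)\<bar> \<le> card J * c" by auto
    have "z (insert j J) = (z J)(j := y j)" by (auto simp: z_def)
    moreover have "y j \<in> space M" using y insert.prems by (auto simp: space_PiM)
    ultimately have "\<bar>f (z J) - f (z (insert j J))\<bar> \<le> c"
      using has_bounded_differencesD[OF assms(2) z_J(1)] insert.prems by simp
    moreover have "z (insert j J) \<in> space (PiM I (\<lambda>_. M))"
      using x y insert.prems by (auto simp: z_def space_PiM PiE_iff extensional_def)
    ultimately show ?case using z_J(2) insert.hyps by (simp add: algebra_simps)
  qed
  moreover have "z I = y" using x y by (auto simp: z_def space_PiM PiE_iff extensional_def)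
  ultimately show ?thesis by auto
qed

lemma integrable_bounded_differences:
  fixes f :: "('i \<Rightarrow> 'a) \<Rightarrow> real"
  assumes M: "prob_space M" and "finite I"
    and [measurable]: "f \<in> borel_measurable (PiM I (\<lambda>_. M))"
    and bd: "has_bounded_differences M I f c"
  shows "integrable (PiM I (\<lambda>_. M)) f"
proof -
  interpret P: prob_space "PiM I (\<lambda>_. M)" by (rule prob_space_PiM) (rule M)
  obtain x0 where x0: "x0 \<in> space (PiM I (\<lambda>_. M))" using P.not_empty by blast
  show ?thesis
  proof (rule P.integrable_const_bound[where B="\<bar>f x0\<bar> + card I * c"])
    show "AE x in PiM I (\<lambda>_. M). norm (f x) \<le> \<bar>f x0\<bar> + card I * c"
      using bounded_differences_dist_le[OF \<open>finite I\<close> bd x0] by (intro AE_I2) fastforce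
  qed simp
qed

lemma measurable_fun_upd_pair_space:
  "(\<lambda>z. (fst z)(i := snd z)) \<in> PiM I (\<lambda>_. M) \<Otimes>\<^sub>M M \<rightarrow>\<^sub>M PiM (insert i I) (\<lambda>_. M)"
  by (rule measurable_fun_upd[where J=I]) auto

lemma measurable_fun_upd_component:
  assumes "x \<in> space (PiM I (\<lambda>_. M))"
  shows "(\<lambda>y. x(i := y)) \<in> M \<rightarrow>\<^sub>M PiM (insert i I) (\<lambda>_. M)"
  using measurable_Pair2[OF measurable_fun_upd_pair_space assms] by simp

lemma measurable_fun_upd_comp:
  assumes "f \<in> borel_measurable (PiM (insert i I) (\<lambda>_. M))" "x \<in> space (PiM I (\<lambda>_. M))"
  shows "(\<lambda>y. f (x(i := y))) \<in> borel_measurable M"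
  using measurable_comp[OF measurable_fun_upd_component[OF assms(2)] assms(1)] by (simp add: comp_def)

lemma measurable_fun_upd_pair:
  assumes "f \<in> borel_measurable (PiM (insert i I) (\<lambda>_. M))"
  shows "(\<lambda>(x, y). f (x(i := y))) \<in> borel_measurable (PiM I (\<lambda>_. M) \<Otimes>\<^sub>M M)"
  using measurable_comp[OF measurable_fun_upd_pair_space assms] by (simp add: case_prod_beta' comp_def)

lemma measurable_integral_fun_upd:
  fixes f :: "('i \<Rightarrow> 'a) \<Rightarrow> real"
  assumes "prob_space M" "f \<in> borel_measurable (PiM (insert i I) (\<lambda>_. M))"
  shows "(\<lambda>x. \<integral>y. f (x(i := y)) \<partial>M) \<in> borel_measurable (PiM I (\<lambda>_. M))"
  using sigma_finite_measure.borel_measurable_lebesgue_integral[OF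
      prob_space_imp_sigma_finite[OF assms(1)], where f="\<lambda>x y. f (x(i := y))"]
    measurable_fun_upd_pair[OF assms(2)]
  by simp

lemma integrable_fun_upd:
  fixes f :: "('i \<Rightarrow> 'a) \<Rightarrow> real"
  assumes M: "prob_space M" and f: "f \<in> borel_measurable (PiM (insert i I) (\<lambda>_. M))"
    and bd: "has_bounded_differences M (insert i I) f c" and x: "x \<in> space (PiM I (\<lambda>_. M))"
  shows "integrable M (\<lambda>y. f (x(i := y)))"
proof -
  interpret prob_space M by (rule M)
  note upd = measurable_fun_upd_component[OF x, of i]
  obtain y0 where "y0 \<in> space M" using not_empty by blast
  have "\<bar>f (x(i := y))\<bar> \<le> \<bar>f (x(i := y0))\<bar> + c" if "y \<in> space M" for y
    using has_bounded_differencesD[OF bd measurable_space[OF upd \<open>y0 \<in> space M\<close>] insertI1 that]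
    by simp
  then show ?thesis
    using measurable_fun_upd_comp[OF f x]
    by (intro integrable_const_bound[where B="\<bar>f (x(i := y0))\<bar> + c"] AE_I2) simp_all
qed

lemma has_bounded_differences_integral_fun_upd:
  fixes f :: "('i \<Rightarrow> 'a) \<Rightarrow> real"
  assumes M: "prob_space M" and "i \<notin> I" and f: "f \<in> borel_measurable (PiM (insert i I) (\<lambda>_. M))"
    and bd: "has_bounded_differences M (insert i I) f c"
  shows "has_bounded_differences M I (\<lambda>x. \<integral>y. f (x(i := y)) \<partial>M) c"
  unfolding has_bounded_differences_def
proof (intro ballI)
  interpret M: prob_space M by (rule M)
  fix x j z assume x: "x \<in> space (PiM I (\<lambda>_. M))" and "j \<in> I" and z: "z \<in> space M"
  define d where "d y = f (x(i := y)) - f ((x(i := y))(j := z))" for y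
  have "j \<noteq> i" using \<open>i \<notin> I\<close> \<open>j \<in> I\<close> by blast
  have "x(j := z) \<in> space (PiM I (\<lambda>_. M))"
    using x z \<open>j \<in> I\<close> by (auto simp: space_PiM PiE_iff extensional_def)
  from integrable_fun_upd[OF M f bd this]
  have int_z: "integrable M (\<lambda>y. f ((x(i := y))(j := z)))"
    using \<open>j \<noteq> i\<close> by (simp add: fun_upd_twist)
  note int_x = integrable_fun_upd[OF M f bd x]
  have d_le: "d y \<le> c \<and> -c \<le> d y" if "y \<in> space M" for y
  proof -
    have "x(i := y) \<in> space (PiM (insert i I) (\<lambda>_. M))"
      using x that by (auto simp: space_PiM PiE_iff extensional_def)
    from has_bounded_differencesD[OF bd this _ z] \<open>j \<in> I\<close>
    have "\<bar>d y\<bar> \<le> c" unfolding d_def by blast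
    then show ?thesis by linarith
  qed
  have "(\<integral>y. f (x(i := y)) \<partial>M) - (\<integral>y. f ((x(j := z))(i := y)) \<partial>M) = (\<integral>y. d y \<partial>M)"
    unfolding d_def using int_x int_z \<open>j \<noteq> i\<close>
    by (simp add: fun_upd_twist Bochner_Integration.integral_diff)
  moreover have "integrable M d" unfolding d_def using int_x int_z by simp
  then have "(\<integral>y. d y \<partial>M) \<le> c" "-c \<le> (\<integral>y. d y \<partial>M)"
    using d_le by (auto intro!: M.integral_le_const M.integral_ge_const AE_I2)
  ultimately show "\<bar>(\<integral>y. f (x(i := y)) \<partial>M) - (\<integral>y. f ((x(j := z))(i := y)) \<partial>M)\<bar> \<le> c"
    by linarith
qed

lemma (in prob_space) Hoeffdings_lemma_oscillation:
  assumes [measurable]: "h \<in> borel_measurable M" and "0 < l"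
    and osc: "\<And>y y'. y \<in> space M \<Longrightarrow> y' \<in> space M \<Longrightarrow> h y - h y' \<le> c"
  shows "(\<integral>\<^sup>+y. ennreal (exp (l * (h y - expectation h))) \<partial>M) \<le> ennreal (exp (l\<^sup>2 * c\<^sup>2 / 8))"
proof -
  obtain y0 where "y0 \<in> space M" using not_empty by blast
  define a where "a = Inf (h ` space M)"
  have bdd: "bdd_below (h ` space M)"
    using osc[OF \<open>y0 \<in> space M\<close>] by (intro bdd_belowI[where m="h y0 - c"]) force
  have "h y \<in> {a..a + c}" if "y \<in> space M" for y
  proof -
    have "h y - c \<le> h y'" if "y' \<in> space M" for y'
      using osc[OF \<open>y \<in> space M\<close> that] by simp
    then have "h y - c \<le> a"
      unfolding a_def using not_empty by (intro cInf_greatest) auto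
    moreover have "a \<le> h y" unfolding a_def using bdd that by (intro cInf_lower) auto
    ultimately show ?thesis by simp
  qed
  then interpret interval_bounded_random_variable M h a "a + c"
    by unfold_locales (auto intro: AE_I2)
  have "0 \<le> c" using osc[OF \<open>y0 \<in> space M\<close> \<open>y0 \<in> space M\<close>] by simp
  then show ?thesis using Hoeffdings_lemma_nn_integral[OF \<open>0 < l\<close>] by simp
qed

lemma mcdiarmid_mgf_fun_upd_le:
  fixes f :: "('i \<Rightarrow> 'a) \<Rightarrow> real" and c l :: real
  assumes M: "prob_space M" and "0 < l"
    and f: "f \<in> borel_measurable (PiM (insert i I) (\<lambda>_. M))" "has_bounded_differences M (insert i I) f c"
    and x: "x \<in> space (PiM I (\<lambda>_. M))"
  shows "(\<integral>\<^sup>+y. ennreal (exp (l * (f (x(i := y)) - (\<integral>y. f (x(i := y)) \<partial>M)))) \<partial>M)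
    \<le> ennreal (exp (l\<^sup>2 * c\<^sup>2 / 8))"
proof (rule prob_space.Hoeffdings_lemma_oscillation[OF M measurable_fun_upd_comp[OF f(1) x] \<open>0 < l\<close>])
  fix y y' assume "y \<in> space M" "y' \<in> space M"
  with has_bounded_differencesD[OF f(2) measurable_space[OF measurable_fun_upd_component[OF x] \<open>y \<in> space M\<close>]]
  show "f (x(i := y)) - f (x(i := y')) \<le> c" by fastforce
qed

lemma mcdiarmid_mgf_insert_le:
  fixes M :: "'a measure" and I :: "'i set" and i :: 'i and f :: "('i \<Rightarrow> 'a) \<Rightarrow> real" and c l :: real
  defines "N \<equiv> PiM I (\<lambda>_. M)" and "N' \<equiv> PiM (insert i I) (\<lambda>_. M)"
    and "g \<equiv> \<lambda>x. \<integral>y. f (x(i := y)) \<partial>M"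
  assumes M: "prob_space M" and "finite I" "i \<notin> I" "0 < l"
    and f: "f \<in> borel_measurable N'" "has_bounded_differences M (insert i I) f c"
  shows "(\<integral>\<^sup>+x. ennreal (exp (l * (f x - (\<integral>x. f x \<partial>N')))) \<partial>N')
    \<le> (\<integral>\<^sup>+x. ennreal (exp (l * (g x - (\<integral>x. g x \<partial>N)))) \<partial>N) * ennreal (exp (l\<^sup>2 * c\<^sup>2 / 8))"
proof -
  interpret M: prob_space M by (rule M)
  interpret P: product_prob_space "\<lambda>_::'i. M"
    by (simp add: product_prob_space_def product_prob_space_axioms_def product_sigma_finite_def
        M prob_space_imp_sigma_finite)
  note [measurable] = f(1)[unfolded N'_def]
  have [measurable]: "g \<in> borel_measurable N"
    unfolding g_def N_def using M f(1)[unfolded N'_def] by (rule measurable_integral_fun_upd)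
  have "(\<integral>x. f x \<partial>N') = (\<integral>x. g x \<partial>N)"
    unfolding N'_def N_def g_def
    using integrable_bounded_differences[OF M _ f[unfolded N'_def]] \<open>finite I\<close> \<open>i \<notin> I\<close>
    by (intro P.product_integral_insert) auto
  then have "(\<integral>\<^sup>+x. ennreal (exp (l * (f x - (\<integral>x. f x \<partial>N')))) \<partial>N')
      = (\<integral>\<^sup>+x. (\<integral>\<^sup>+y. ennreal (exp (l * (g x - (\<integral>x. g x \<partial>N))))
            * ennreal (exp (l * (f (x(i := y)) - g x))) \<partial>M) \<partial>N)"
    unfolding N'_def N_def
    by (subst P.product_nn_integral_insert[OF \<open>finite I\<close> \<open>i \<notin> I\<close>])
      (auto intro!: nn_integral_cong simp: ennreal_mult[symmetric] exp_add[symmetric] algebra_simps)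
  also have "\<dots> = (\<integral>\<^sup>+x. ennreal (exp (l * (g x - (\<integral>x. g x \<partial>N))))
            * (\<integral>\<^sup>+y. ennreal (exp (l * (f (x(i := y)) - g x))) \<partial>M) \<partial>N)"
  proof (intro nn_integral_cong nn_integral_cmult)
    fix x assume "x \<in> space N"
    note [measurable] = measurable_fun_upd_comp[OF f(1)[unfolded N'_def] this[unfolded N_def]]
    show "(\<lambda>y. ennreal (exp (l * (f (x(i := y)) - g x)))) \<in> borel_measurable M" by measurable
  qed
  also have "\<dots> \<le> (\<integral>\<^sup>+x. ennreal (exp (l * (g x - (\<integral>x. g x \<partial>N)))) * ennreal (exp (l\<^sup>2 * c\<^sup>2 / 8)) \<partial>N)"
    unfolding g_def N_def
    using mcdiarmid_mgf_fun_upd_le[OF M \<open>0 < l\<close> f[unfolded N'_def]]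
    by (intro nn_integral_mono mult_left_mono) simp_all
  also have "\<dots> = (\<integral>\<^sup>+x. ennreal (exp (l * (g x - (\<integral>x. g x \<partial>N)))) \<partial>N) * ennreal (exp (l\<^sup>2 * c\<^sup>2 / 8))"
    by (intro nn_integral_multc) measurable
  finally show ?thesis .
qed

lemma mcdiarmid_mgf_le:
  fixes f :: "('i \<Rightarrow> 'a) \<Rightarrow> real" and c l :: real
  assumes M: "prob_space M" and "finite I" and "0 < l"
    and "f \<in> borel_measurable (PiM I (\<lambda>_. M))" and "has_bounded_differences M I f c"
  shows "(\<integral>\<^sup>+x. ennreal (exp (l * (f x - (\<integral>x. f x \<partial>PiM I (\<lambda>_. M))))) \<partial>PiM I (\<lambda>_. M))
          \<le> ennreal (exp (l\<^sup>2 * c\<^sup>2 * card I / 8))"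
  using assms(2,4,5)
proof (induction I arbitrary: f rule: finite_induct)
  case empty
  then show ?case
    by (simp add: PiM_empty nn_integral_count_space_finite lebesgue_integral_count_space_finite)
next
  case (insert i I)
  define g where "g x = (\<integral>y. f (x(i := y)) \<partial>M)" for x
  have "g \<in> borel_measurable (PiM I (\<lambda>_. M))"
    unfolding g_def using M insert.prems(1) by (rule measurable_integral_fun_upd)
  moreover have "has_bounded_differences M I g c"
    unfolding g_def using M insert.hyps(2) insert.prems by (rule has_bounded_differences_integral_fun_upd)
  ultimately have IH: "(\<integral>\<^sup>+x. ennreal (exp (l * (g x - (\<integral>x. g x \<partial>PiM I (\<lambda>_. M))))) \<partial>PiM I (\<lambda>_. M))
      \<le> ennreal (exp (l\<^sup>2 * c\<^sup>2 * card I / 8))"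
    by (rule insert.IH)
  have "(\<integral>\<^sup>+x. ennreal (exp (l * (f x - (\<integral>x. f x \<partial>PiM (insert i I) (\<lambda>_. M)))))
        \<partial>PiM (insert i I) (\<lambda>_. M))
      \<le> ennreal (exp (l\<^sup>2 * c\<^sup>2 * card I / 8)) * ennreal (exp (l\<^sup>2 * c\<^sup>2 / 8))"
    using order.trans[OF mcdiarmid_mgf_insert_le[OF M insert.hyps \<open>0 < l\<close> insert.prems]
        mult_right_mono[OF IH[unfolded g_def]]] by simp
  also have "\<dots> = ennreal (exp (l\<^sup>2 * c\<^sup>2 * card (insert i I) / 8))"
    using insert.hyps by (simp add: ennreal_mult[symmetric] exp_add[symmetric] field_simps)
  finally show ?case .
qed

lemma mcdiarmid_tail_ge:
  fixes f :: "('i \<Rightarrow> 'a) \<Rightarrow> real" and c t :: real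
  assumes M: "prob_space M" and "finite I" "I \<noteq> {}" "0 < t" "0 < c"
    and f: "f \<in> borel_measurable (PiM I (\<lambda>_. M))" "has_bounded_differences M I f c"
  shows "measure (PiM I (\<lambda>_. M)) {x \<in> space (PiM I (\<lambda>_. M)). t \<le> f x - (\<integral>x. f x \<partial>PiM I (\<lambda>_. M))}
          \<le> exp (-2 * t\<^sup>2 / (card I * c\<^sup>2))"
proof -
  define P where "P = PiM I (\<lambda>_. M)"
  interpret P: prob_space P unfolding P_def by (rule prob_space_PiM) (rule M)
  define \<mu> where "\<mu> = (\<integral>x. f x \<partial>P)"
  define N where "N = real (card I)"
  have "0 < N" using assms(2,3) by (simp add: N_def card_gt_0_iff)
  \<comment> \<open>the minimiser of the Chernoff exponent \<open>- l * t + l\<^sup>2 * c\<^sup>2 * N / 8\<close>\<close>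
  define l where "l = 4 * t / (N * c\<^sup>2)"
  have "0 < l" using assms(4,5) \<open>0 < N\<close> by (simp add: l_def)
  note [measurable] = f(1)[folded P_def]
  have "emeasure P {x \<in> space P. t \<le> f x - \<mu>}
      \<le> ennreal (exp (- l * t)) * (\<integral>\<^sup>+x. ennreal (exp (l * (f x - \<mu>))) * indicator (space P) x \<partial>P)"
    by (rule Chernoff_ineq_nn_integral_ge[OF \<open>0 < l\<close>]) measurable
  also have "(\<integral>\<^sup>+x. ennreal (exp (l * (f x - \<mu>))) * indicator (space P) x \<partial>P)
      = (\<integral>\<^sup>+x. ennreal (exp (l * (f x - \<mu>))) \<partial>P)"
    by (rule nn_integral_cong) simp
  also have "\<dots> \<le> ennreal (exp (l\<^sup>2 * c\<^sup>2 * N / 8))"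
    unfolding \<mu>_def P_def N_def by (rule mcdiarmid_mgf_le[OF M assms(2) \<open>0 < l\<close> f])
  finally have "emeasure P {x \<in> space P. t \<le> f x - \<mu>}
      \<le> ennreal (exp (- l * t)) * ennreal (exp (l\<^sup>2 * c\<^sup>2 * N / 8))"
    by (simp add: mult_left_mono)
  also have "\<dots> = ennreal (exp (-2 * t\<^sup>2 / (N * c\<^sup>2)))"
    using \<open>0 < N\<close> \<open>0 < c\<close> unfolding l_def
    by (simp add: ennreal_mult[symmetric] exp_add[symmetric] field_simps power2_eq_square)
  finally show ?thesis
    unfolding P_def \<mu>_def N_def by (simp add: P.emeasure_eq_measure[unfolded P_def] ennreal_le_iff)
qed

lemma mcdiarmid_tail_abs_ge:
  fixes f :: "('i \<Rightarrow> 'a) \<Rightarrow> real" and c t :: real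
  assumes M: "prob_space M" and I: "finite I" "I \<noteq> {}" and "0 < t" "0 < c"
    and f: "f \<in> borel_measurable (PiM I (\<lambda>_. M))" "has_bounded_differences M I f c"
  shows "measure (PiM I (\<lambda>_. M)) {x \<in> space (PiM I (\<lambda>_. M)). t \<le> \<bar>f x - (\<integral>x. f x \<partial>PiM I (\<lambda>_. M))\<bar>}
          \<le> 2 * exp (-2 * t\<^sup>2 / (card I * c\<^sup>2))"
proof -
  define P where "P = PiM I (\<lambda>_. M)"
  interpret P: prob_space P unfolding P_def by (rule prob_space_PiM) (rule M)
  note [measurable] = f(1)[folded P_def]
  define upper where "upper = {x \<in> space P. t \<le> f x - (\<integral>x. f x \<partial>P)}"
  define lower where "lower = {x \<in> space P. t \<le> - f x - (\<integral>x. - f x \<partial>P)}"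
  have "has_bounded_differences M I (\<lambda>x. - f x) c"
    using f(2) unfolding has_bounded_differences_def by (simp add: abs_minus_commute)
  then have lower_le: "measure P lower \<le> exp (-2 * t\<^sup>2 / (card I * c\<^sup>2))"
    unfolding lower_def P_def using f(1) by (intro mcdiarmid_tail_ge[OF M I \<open>0 < t\<close> \<open>0 < c\<close>]) auto
  have upper_le: "measure P upper \<le> exp (-2 * t\<^sup>2 / (card I * c\<^sup>2))"
    unfolding upper_def P_def by (rule mcdiarmid_tail_ge[OF M I \<open>0 < t\<close> \<open>0 < c\<close> f])
  have "upper \<in> sets P" "lower \<in> sets P" unfolding upper_def lower_def by measurable
  moreover have "{x \<in> space P. t \<le> \<bar>f x - (\<integral>x. f x \<partial>P)\<bar>} \<subseteq> upper \<union> lower"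
    unfolding upper_def lower_def by (auto simp: abs_le_iff)
  ultimately have "measure P {x \<in> space P. t \<le> \<bar>f x - (\<integral>x. f x \<partial>P)\<bar>} \<le> measure P (upper \<union> lower)"
    by (intro P.finite_measure_mono) auto
  also have "\<dots> \<le> measure P upper + measure P lower"
    using \<open>upper \<in> sets P\<close> \<open>lower \<in> sets P\<close> by (rule measure_Un_le)
  also have "\<dots> \<le> 2 * exp (-2 * t\<^sup>2 / (card I * c\<^sup>2))"
    using upper_le lower_le by simp
  finally show ?thesis unfolding P_def .
qed

lemma has_bounded_differences_nonneg:
  assumes "prob_space M" "I \<noteq> {}" "has_bounded_differences M I f c"
  shows "0 \<le> c"
proof -
  interpret P: prob_space "PiM I (\<lambda>_. M)" by (rule prob_space_PiM) (rule assms(1))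
  obtain x where x: "x \<in> space (PiM I (\<lambda>_. M))" using P.not_empty by blast
  obtain i where "i \<in> I" using assms(2) by blast
  with x have "x i \<in> space M" by (auto simp: space_PiM)
  from has_bounded_differencesD[OF assms(3) x \<open>i \<in> I\<close> this] show ?thesis by simp
qed

lemma bounded_differences_eq_integral:
  fixes f :: "('i \<Rightarrow> 'a) \<Rightarrow> real" and c :: real
  assumes "prob_space M" "finite I" "has_bounded_differences M I f c" "card I * c = 0"
    and x: "x \<in> space (PiM I (\<lambda>_. M))"
  shows "f x = (\<integral>x. f x \<partial>PiM I (\<lambda>_. M))"
proof -
  interpret P: prob_space "PiM I (\<lambda>_. M)" by (rule prob_space_PiM) (rule assms(1))
  have "f z = f x" if "z \<in> space (PiM I (\<lambda>_. M))" for z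
    using bounded_differences_dist_le[OF assms(2,3) that x] assms(4) by simp
  then have "(\<integral>z. f z \<partial>PiM I (\<lambda>_. M)) = (\<integral>z. f x \<partial>PiM I (\<lambda>_. M))"
    by (rule Bochner_Integration.integral_cong[OF refl])
  then show ?thesis using P.prob_space by simp
qed

theorem mcdiarmid_inequality:
  fixes f :: "('i \<Rightarrow> 'a) \<Rightarrow> real" and c \<delta> :: real
  assumes M: "prob_space M" and I: "finite I" and "0 < \<delta>" "\<delta> \<le> 1"
    and f: "f \<in> borel_measurable (PiM I (\<lambda>_. M))" "has_bounded_differences M I f c"
  shows "measure (PiM I (\<lambda>_. M)) {x \<in> space (PiM I (\<lambda>_. M)).
           \<bar>f x - (\<integral>x. f x \<partial>PiM I (\<lambda>_. M))\<bar> \<le> c * sqrt (card I / 2 * ln (2 / \<delta>))}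
         \<ge> 1 - \<delta>"
proof -
  define P where "P = PiM I (\<lambda>_. M)"
  interpret P: prob_space P unfolding P_def by (rule prob_space_PiM) (rule M)
  note [measurable] = f(1)[folded P_def]
  define L where "L = ln (2 / \<delta>)"
  define t where "t = c * sqrt (card I / 2 * L)"
  define A where "A = {x \<in> space P. \<bar>f x - (\<integral>x. f x \<partial>P)\<bar> \<le> t}"
  have "0 < L" using \<open>0 < \<delta>\<close> \<open>\<delta> \<le> 1\<close> by (simp add: L_def)
  have "1 - \<delta> \<le> measure P A"
  proof (cases "0 < card I * c")
    case True
    then have "I \<noteq> {}" "0 < c" using has_bounded_differences_nonneg[OF M _ f(2)]
      by (auto simp: zero_less_mult_iff)
    then have "0 < t" using \<open>0 < L\<close> I by (simp add: t_def card_gt_0_iff)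
    have "2 * t\<^sup>2 / (card I * c\<^sup>2) = L"
      using \<open>I \<noteq> {}\<close> \<open>0 < c\<close> \<open>0 < L\<close> I by (simp add: t_def power_mult_distrib card_gt_0_iff)
    then have "measure P {x \<in> space P. t \<le> \<bar>f x - (\<integral>x. f x \<partial>P)\<bar>} \<le> \<delta>"
      using mcdiarmid_tail_abs_ge[OF M I \<open>I \<noteq> {}\<close> \<open>0 < t\<close> \<open>0 < c\<close> f] \<open>0 < \<delta>\<close>
      unfolding P_def by (simp add: L_def exp_minus)
    moreover have "measure P (space P - A) \<le> measure P {x \<in> space P. t \<le> \<bar>f x - (\<integral>x. f x \<partial>P)\<bar>}"
      by (rule P.finite_measure_mono) (auto simp: A_def)
    moreover have "A \<in> sets P" unfolding A_def by measurable
    ultimately show ?thesis using P.prob_compl by simp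
  next
    case False
    then have "card I * c = 0"
      using has_bounded_differences_nonneg[OF M _ f(2)] by (cases "I = {}") auto
    then have "A = space P"
      using bounded_differences_eq_integral[OF M I f(2)] by (auto simp: A_def t_def P_def)
    then show ?thesis using P.prob_space \<open>0 < \<delta>\<close> by simp
  qed
  then show ?thesis unfolding A_def t_def L_def P_def .
qed

section \<open>Tuples of distinct indices and averages\<close>

lemma finite_dtuples: "finite B \<Longrightarrow> finite (dtuples k B)"
  unfolding dtuples_def by (rule finite_subset[OF _ finite_lists_length_eq[of B k]]) auto

lemma card_dtuples:
  assumes "finite B" "k \<le> card B"
  shows "real (card (dtuples k B)) = falling (card B) k"
proof -
  have "card (dtuples k B) = fact (card B) div fact (card B - k)"
    using assms by (simp add: dtuples_def card_lists_distinct_length_eq fact_div_fact)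
  then show ?thesis
    by (simp add: falling_def real_of_nat_div fact_dvd)
qed

lemma falling_Suc: "falling (Suc n) (Suc k) = real (Suc n) * falling n k"
  by (simp add: falling_def)

lemma falling_pos: "0 < falling n k"
  by (simp add: falling_def)

lemma dtuples_ne:
  assumes "finite A" "k \<le> card A"
  shows "dtuples k A \<noteq> {}"
  using card_dtuples[OF assms] falling_pos[of "card A" k] by auto

lemma card_dtuples_containing_le:
  assumes "finite B"
  shows "card {t \<in> dtuples (Suc k) B. m \<in> set t} \<le> Suc k * card (dtuples k (B - {m}))"
proof -
  let ?insert = "\<lambda>(j, u). take j u @ m # drop j u"
  have "{t \<in> dtuples (Suc k) B. m \<in> set t} \<subseteq> ?insert ` ({..<Suc k} \<times> dtuples k (B - {m}))"
  proof
    fix t assume t: "t \<in> {t \<in> dtuples (Suc k) B. m \<in> set t}"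
    then obtain ys zs where t_eq: "t = ys @ m # zs" by (blast dest: split_list)
    with t have "(length ys, ys @ zs) \<in> {..<Suc k} \<times> dtuples k (B - {m})"
      by (auto simp: dtuples_def)
    moreover have "t = ?insert (length ys, ys @ zs)" using t_eq by simp
    ultimately show "t \<in> ?insert ` ({..<Suc k} \<times> dtuples k (B - {m}))" by blast
  qed
  then have "card {t \<in> dtuples (Suc k) B. m \<in> set t} \<le> card ({..<Suc k} \<times> dtuples k (B - {m}))"
    using assms by (intro surj_card_le) (auto intro: finite_dtuples)
  then show ?thesis by (simp add: card_cartesian_product)
qed

lemma card_dtuples_containing:
  assumes "finite B" "Suc k \<le> card B"
  shows "card B * card {t \<in> dtuples (Suc k) B. m \<in> set t} \<le> Suc k * card (dtuples (Suc k) B)"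
proof (cases "m \<in> B")
  case True
  have "card B = Suc (card (B - {m}))" using assms True by (simp add: card_Suc_Diff1)
  then have "real (card (dtuples (Suc k) B)) = real (card B * card (dtuples k (B - {m})))"
    using assms by (simp add: card_dtuples falling_Suc algebra_simps)
  then have "card (dtuples (Suc k) B) = card B * card (dtuples k (B - {m}))"
    by (simp only: of_nat_eq_iff)
  then show ?thesis
    using card_dtuples_containing_le[OF assms(1), of k m] by (simp add: mult.left_commute)
next
  case False
  then have "{t \<in> dtuples (Suc k) B. m \<in> set t} = {}" by (auto simp: dtuples_def)
  then show ?thesis by (simp only: card.empty mult_0_right zero_le)
qed

lemma card_dtuples_le_fact:
  assumes "finite A" "card A \<le> k"
  shows "real (card (dtuples k A)) \<le> fact k"
proof (cases "card A = k")
  case True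
  then show ?thesis using card_dtuples[OF assms(1), of k] by (simp add: falling_def)
next
  case False
  have "k \<le> card A" if "xs \<in> dtuples k A" for xs
  proof -
    from that have "length xs = k" "distinct xs" "set xs \<subseteq> A" by (auto simp: dtuples_def)
    then have "k = card (set xs)" by (simp add: distinct_card)
    also have "\<dots> \<le> card A" using \<open>set xs \<subseteq> A\<close> by (rule card_mono[OF assms(1)])
    finally show ?thesis .
  qed
  then have "dtuples k A = {}" using False assms(2) le_antisym by blast
  then show ?thesis by simp
qed

lemma dtuples_nth_mem: "p \<in> dtuples k A \<Longrightarrow> a < k \<Longrightarrow> p ! a \<in> A"
  unfolding dtuples_def by auto

lemma abs_average_le:
  fixes f :: "'a \<Rightarrow> real"
  assumes "finite S" "S \<noteq> {}" "\<And>s. s \<in> S \<Longrightarrow> \<bar>f s\<bar> \<le> C"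
  shows "\<bar>sum f S / card S\<bar> \<le> C"
proof -
  have "\<bar>sum f S\<bar> \<le> (\<Sum>s\<in>S. C)"
    by (rule order.trans[OF sum_abs sum_mono]) (rule assms(3))
  then show ?thesis
    using assms(1,2) by (simp add: abs_divide divide_le_eq mult.commute)
qed

lemma abs_average_diff_le:
  fixes f g :: "'a \<Rightarrow> real" and C \<rho> :: real
  assumes "finite S" "S \<noteq> {}"
    and "\<And>s. s \<in> S \<Longrightarrow> \<bar>f s\<bar> \<le> C" "\<And>s. s \<in> S \<Longrightarrow> \<bar>g s\<bar> \<le> C"
    and "\<And>s. s \<in> S \<Longrightarrow> \<not> P s \<Longrightarrow> f s = g s"
    and "real (card {s \<in> S. P s}) \<le> \<rho> * card S"
  shows "\<bar>sum f S / card S - sum g S / card S\<bar> \<le> 2 * C * \<rho>"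
proof -
  have "0 \<le> C" using assms(2,3) abs_ge_zero order.trans by blast
  have "\<bar>sum f S - sum g S\<bar> \<le> (\<Sum>s\<in>S. \<bar>f s - g s\<bar>)"
    by (metis sum_abs sum_subtractf)
  also have "\<dots> \<le> (\<Sum>s\<in>S. 2 * C * of_bool (P s))"
  proof (rule sum_mono)
    fix s assume "s \<in> S"
    then show "\<bar>f s - g s\<bar> \<le> 2 * C * of_bool (P s)"
      using assms(3-5)[of s] by (cases "P s") auto
  qed
  also have "\<dots> = 2 * C * card {s \<in> S. P s}"
    using assms(1) by (simp add: sum_distrib_left[symmetric] Int_def)
  also have "\<dots> \<le> 2 * C * (\<rho> * card S)"
    using assms(6) \<open>0 \<le> C\<close> by (simp add: mult_left_mono)
  finally show ?thesis
    using assms(1,2) by (simp add: diff_divide_distrib[symmetric] abs_divide divide_le_eq)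
qed

section \<open>The variance estimator\<close>

lemma pd_kernel_quadratic_form_nonneg:
  "pd_kernel k \<Longrightarrow> 0 \<le> (\<Sum>i<length xs. \<Sum>j<length xs. c i * c j * k (xs ! i) (xs ! j))"
  unfolding pd_kernel_def by blast

lemma pd_kernel_abs_le:
  assumes "pd_kernel k" "\<forall>x. k x x \<le> \<nu>"
  shows "\<bar>k x y\<bar> \<le> \<nu>"
proof -
  have "k y x = k x y" using assms(1) unfolding pd_kernel_def by blast
  then have quadratic_form: "0 \<le> k x x + 2 * s * k x y + s * s * k y y" for s :: real
    using pd_kernel_quadratic_form_nonneg[OF assms(1), where xs="[x, y]" and c="\<lambda>i. if i = 0 then 1 else s"]
    by (simp add: numeral_2_eq_2 algebra_simps)
  show ?thesis
    using quadratic_form[of 1] quadratic_form[of "-1"] assms(2)[rule_format, of x]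
      assms(2)[rule_format, of y] by (simp add: abs_le_iff)
qed

text \<open>No distinctness of the indices is needed: if two of them coincide, \<^const>\<open>Hker\<close> is an empty sum.\<close>
lemma abs_Hker_le:
  assumes "pd_kernel k" "pd_kernel l" "\<forall>x. k x x \<le> \<nu>k" "\<forall>y. l y y \<le> \<nu>l"
  shows "\<bar>Hker k l Z i j q r\<bar> \<le> 4 * \<nu>k * \<nu>l"
proof -
  have k_le: "\<bar>k x x'\<bar> \<le> \<nu>k" for x x' by (rule pd_kernel_abs_le[OF assms(1,3)])
  have l_le: "\<bar>l y y'\<bar> \<le> \<nu>l" for y y' by (rule pd_kernel_abs_le[OF assms(2,4)])
  have "0 \<le> \<nu>k" "0 \<le> \<nu>l" using k_le l_le abs_ge_zero order.trans by blast+
  have term_le: "\<bar>k a b * (l c d + l e f - 2 * l g h)\<bar> \<le> 4 * \<nu>k * \<nu>l" for a b c d e f g h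
  proof -
    have "\<bar>l c d + l e f - 2 * l g h\<bar> \<le> 4 * \<nu>l"
      using l_le[of c d] l_le[of e f] l_le[of g h] by (simp add: abs_le_iff)
    then have "\<bar>k a b\<bar> * \<bar>l c d + l e f - 2 * l g h\<bar> \<le> \<nu>k * (4 * \<nu>l)"
      using k_le \<open>0 \<le> \<nu>k\<close> by (intro mult_mono) simp_all
    then show ?thesis by (simp add: abs_mult mult.left_commute)
  qed
  have "real (card (dtuples 4 {i, j, q, r})) \<le> fact 4"
    by (rule card_dtuples_le_fact) (simp_all add: card_insert_le_m1)
  then have card_le: "real (card (dtuples 4 {i, j, q, r})) \<le> 24"
    by (simp add: fact_numeral)
  have "\<bar>Hker k l Z i j q r\<bar> \<le> (1/24) * (\<Sum>p\<in>dtuples 4 {i, j, q, r}. 4 * \<nu>k * \<nu>l)"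
    unfolding Hker_def Let_def abs_mult abs_divide abs_one abs_numeral
    by (intro mult_left_mono order.trans[OF sum_abs] sum_mono term_le) simp
  also have "\<dots> = real (card (dtuples 4 {i, j, q, r})) / 24 * (4 * \<nu>k * \<nu>l)"
    by simp
  also have "\<dots> \<le> 4 * \<nu>k * \<nu>l"
    using card_le \<open>0 \<le> \<nu>k\<close> \<open>0 \<le> \<nu>l\<close> by (intro mult_left_le_one_le) simp_all
  finally show ?thesis .
qed

lemma Hker_cong:
  assumes "\<And>a. a \<in> {i, j, q, r} \<Longrightarrow> Z a = Z' a"
  shows "Hker k l Z i j q r = Hker k l Z' i j q r"
proof -
  have "Z (p ! a) = Z' (p ! a)" if "p \<in> dtuples 4 {i, j, q, r}" "a < 4" for p a
    using assms dtuples_nth_mem[OF that] by blast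
  then show ?thesis
    unfolding Hker_def Let_def by (intro arg_cong[where f="\<lambda>x. (1/24) * x"] sum.cong refl) simp
qed

lemma Hker_fun_upd:
  "m \<notin> {i, j, q, r} \<Longrightarrow> Hker k l (Z(m := y)) i j q r = Hker k l Z i j q r"
  by (rule Hker_cong) auto

lemma measurable_kernel_components:
  assumes "(\<lambda>(z, z'). h z z') \<in> borel_measurable (M \<Otimes>\<^sub>M M)" "a \<in> I" "b \<in> I"
  shows "(\<lambda>Z. h (Z a) (Z b)) \<in> borel_measurable (PiM I (\<lambda>_. M))"
proof -
  have "(\<lambda>Z. (Z a, Z b)) \<in> PiM I (\<lambda>_. M) \<rightarrow>\<^sub>M M \<Otimes>\<^sub>M M"
    using assms(2,3) by (intro measurable_Pair measurable_component_singleton)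
  from measurable_comp[OF this assms(1)] show ?thesis by (simp add: comp_def)
qed

lemma measurable_Hker:
  assumes "(\<lambda>(z, z'). k (fst z) (fst z')) \<in> borel_measurable (M \<Otimes>\<^sub>M M)"
    and "(\<lambda>(z, z'). l (snd z) (snd z')) \<in> borel_measurable (M \<Otimes>\<^sub>M M)"
    and "{i, j, q, r} \<subseteq> I"
  shows "(\<lambda>Z. Hker k l Z i j q r) \<in> borel_measurable (PiM I (\<lambda>_. M))"
proof -
  have "p ! a \<in> I" if "p \<in> dtuples 4 {i, j, q, r}" "a < 4" for p a
    using dtuples_nth_mem[OF that] assms(3) by blast
  then show ?thesis
    unfolding Hker_def Let_def
    by (intro borel_measurable_times borel_measurable_const borel_measurable_sum
        borel_measurable_add borel_measurable_diff
        measurable_kernel_components[OF assms(1)] measurable_kernel_components[OF assms(2)]) auto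
qed

lemma measurable_sigma2_hat:
  assumes "(\<lambda>(z, z'). k (fst z) (fst z')) \<in> borel_measurable (M \<Otimes>\<^sub>M M)"
    and "(\<lambda>(z, z'). l (snd z) (snd z')) \<in> borel_measurable (M \<Otimes>\<^sub>M M)"
  shows "sigma2_hat k l n \<in> borel_measurable (PiM {1..n} (\<lambda>_. M))"
proof -
  have "{p ! 0, p ! 1, p ! 2, p ! 3} \<subseteq> {1..n}" if "p \<in> dtuples 4 {1..n}" for p
    using dtuples_nth_mem[OF that] by (simp del: atLeastAtMost_iff)
  moreover have "{p ! 0, t ! 0, t ! 1, t ! 2} \<subseteq> {1..n}"
    if "p \<in> dtuples 4 {1..n}" "t \<in> dtuples 3 ({1..n} - {p ! 0})" for p t
    using dtuples_nth_mem[OF that(1), of 0] dtuples_nth_mem[OF that(2)] by auto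
  ultimately show ?thesis
    unfolding sigma2_hat_def eta_hat_def
    by (intro borel_measurable_times borel_measurable_const borel_measurable_sum
        borel_measurable_power borel_measurable_diff measurable_Hker[OF assms])
qed

definition sigma2_pairs :: "nat \<Rightarrow> (nat list \<times> nat list) set" where
  "sigma2_pairs n = (SIGMA p:dtuples 4 {1..n}. dtuples 3 ({1..n} - {p ! 0}))"

lemma card_dtuples_avoiding:
  assumes "p \<in> dtuples 4 {1..n}"
  shows "real (card (dtuples 3 ({1..n} - {p ! 0}))) = falling (n - 1) 3"
proof -
  have "p ! 0 \<in> {1..n}" by (rule dtuples_nth_mem[OF assms]) simp
  moreover have "4 \<le> card {1..n}"
    using assms card_mono[of "{1..n}" "set p"] distinct_card[of p] by (auto simp: dtuples_def)
  ultimately show ?thesis by (subst card_dtuples) auto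
qed

lemma finite_sigma2_pairs: "finite (sigma2_pairs n)"
  unfolding sigma2_pairs_def by (intro finite_SigmaI finite_dtuples) auto

lemma card_sigma2_pairs:
  assumes "4 \<le> n"
  shows "real (card (sigma2_pairs n)) = falling n 4 * falling (n - 1) 3"
proof -
  have "card (sigma2_pairs n) = (\<Sum>p\<in>dtuples 4 {1..n}. card (dtuples 3 ({1..n} - {p ! 0})))"
    unfolding sigma2_pairs_def by (simp add: finite_dtuples)
  then have "real (card (sigma2_pairs n))
      = (\<Sum>p\<in>dtuples 4 {1..n}. real (card (dtuples 3 ({1..n} - {p ! 0}))))"
    by (simp only: of_nat_sum)
  also have "\<dots> = (\<Sum>p\<in>dtuples 4 {1..n}. falling (n - 1) 3)"
    by (rule sum.cong[OF refl card_dtuples_avoiding])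
  also have "\<dots> = falling n 4 * falling (n - 1) 3"
    using assms by (simp add: card_dtuples)
  finally show ?thesis .
qed

definition sigma2_pair_mean ::
    "('x \<Rightarrow> 'x \<Rightarrow> real) \<Rightarrow> ('y \<Rightarrow> 'y \<Rightarrow> real) \<Rightarrow> nat \<Rightarrow> (nat \<Rightarrow> 'x \<times> 'y) \<Rightarrow> real" where
  "sigma2_pair_mean k l n Z =
     (\<Sum>(p, t)\<in>sigma2_pairs n. Hker k l Z (p!0) (p!1) (p!2) (p!3) * Hker k l Z (p!0) (t!0) (t!1) (t!2))
       / card (sigma2_pairs n)"

lemma sigma2_hat_eq:
  assumes "4 \<le> n"
  shows "sigma2_hat k l n Z = 16 * (sigma2_pair_mean k l n Z - (eta_hat k l n Z)\<^sup>2)"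
proof -
  have "(\<Sum>p\<in>dtuples 4 {1..n}. \<Sum>t\<in>dtuples 3 ({1..n} - {p!0}).
        Hker k l Z (p!0) (p!1) (p!2) (p!3) * Hker k l Z (p!0) (t!0) (t!1) (t!2))
      = (\<Sum>(p, t)\<in>sigma2_pairs n.
        Hker k l Z (p!0) (p!1) (p!2) (p!3) * Hker k l Z (p!0) (t!0) (t!1) (t!2))"
    unfolding sigma2_pairs_def by (rule sum.Sigma) (simp_all add: finite_dtuples)
  then show ?thesis
    unfolding sigma2_hat_def sigma2_pair_mean_def card_sigma2_pairs[OF assms] by simp
qed

lemma eta_hat_eq_average:
  assumes "4 \<le> n"
  shows "eta_hat k l n Z
    = (\<Sum>p\<in>dtuples 4 {1..n}. Hker k l Z (p!0) (p!1) (p!2) (p!3)) / card (dtuples 4 {1..n})"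
  using assms card_dtuples[of "{1..n}" 4] by (simp add: eta_hat_def)

lemma card_dtuples_containing_index:
  assumes "4 \<le> n"
  shows "real (card {p \<in> dtuples 4 {1..n}. m \<in> set p}) \<le> 4 / n * card (dtuples 4 {1..n})"
proof -
  have "n * card {p \<in> dtuples 4 {1..n}. m \<in> set p} \<le> 4 * card (dtuples 4 {1..n})"
    using card_dtuples_containing[of "{1..n}" 3 m] assms by simp
  from of_nat_mono[OF this, where 'a=real] show ?thesis
    using assms by (simp add: field_simps)
qed

lemma card_dtuples_avoiding_containing:
  assumes "4 \<le> n" "p \<in> dtuples 4 {1..n}"
  shows "real n * card {t \<in> dtuples 3 ({1..n} - {p ! 0}). m \<in> set p \<or> m \<in> set t}
    \<le> (4 + real n * of_bool (m \<in> set p)) * falling (n - 1) 3"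
proof (cases "m \<in> set p")
  case True
  then show ?thesis using card_dtuples_avoiding[OF assms(2)] by (simp add: algebra_simps)
next
  case False
  define c where "c = real (card {t \<in> dtuples 3 ({1..n} - {p ! 0}). m \<in> set t})"
  have "p ! 0 \<in> {1..n}" using dtuples_nth_mem[OF assms(2), of 0] by simp
  then have "card ({1..n} - {p ! 0}) = n - 1" by simp
  then have "(n - 1) * card {t \<in> dtuples 3 ({1..n} - {p ! 0}). m \<in> set t}
      \<le> 3 * card (dtuples 3 ({1..n} - {p ! 0}))"
    using card_dtuples_containing[of "{1..n} - {p ! 0}" 2 m] assms(1) by simp
  from of_nat_mono[OF this, where 'a=real]
  have "(real n - 1) * c \<le> 3 * falling (n - 1) 3"
    using card_dtuples_avoiding[OF assms(2)] assms(1) by (simp add: c_def of_nat_diff)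
  moreover have "3 * (real n * c) \<le> 4 * ((real n - 1) * c)"
    using assms(1) by (simp add: c_def mult_right_mono algebra_simps)
  ultimately show ?thesis using False by (simp add: c_def)
qed

lemma card_sigma2_pairs_containing:
  assumes "4 \<le> n"
  shows "real (card {(p, t) \<in> sigma2_pairs n. m \<in> set p \<or> m \<in> set t})
    \<le> 8 / n * card (sigma2_pairs n)"
proof -
  define D where "D = dtuples 4 {1..n}"
  define d where "d = falling (n - 1) 3"
  have "{(p, t) \<in> sigma2_pairs n. m \<in> set p \<or> m \<in> set t}
      = (SIGMA p:D. {t \<in> dtuples 3 ({1..n} - {p ! 0}). m \<in> set p \<or> m \<in> set t})"
    unfolding sigma2_pairs_def D_def by auto
  then have "real n * card {(p, t) \<in> sigma2_pairs n. m \<in> set p \<or> m \<in> set t}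
      = (\<Sum>p\<in>D. real n * card {t \<in> dtuples 3 ({1..n} - {p ! 0}). m \<in> set p \<or> m \<in> set t})"
    by (simp add: D_def finite_dtuples sum_distrib_left)
  also have "\<dots> \<le> (\<Sum>p\<in>D. (4 + real n * of_bool (m \<in> set p)) * d)"
    unfolding d_def D_def by (intro sum_mono card_dtuples_avoiding_containing[OF assms])
  also have "\<dots> = 4 * d * card D + n * d * card {p \<in> D. m \<in> set p}"
    by (simp add: sum.distrib sum_distrib_left[symmetric] sum_distrib_right[symmetric] D_def
        finite_dtuples Int_def algebra_simps)
  also have "\<dots> \<le> 4 * d * card D + n * d * (4 / n * card D)"
    using card_dtuples_containing_index[OF assms, of m]
    by (intro add_left_mono mult_left_mono) (simp_all add: D_def d_def falling_def)
  also have "\<dots> = 8 * (card D * d)"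
    using assms by simp
  finally show ?thesis
    using card_sigma2_pairs[OF assms] card_dtuples[of "{1..n}" 4] assms
    by (simp add: D_def d_def field_simps)
qed

lemma abs_eta_hat_le:
  assumes "4 \<le> n" and "\<And>Z i j q r. \<bar>Hker k l Z i j q r\<bar> \<le> Hb"
  shows "\<bar>eta_hat k l n Z\<bar> \<le> Hb"
  unfolding eta_hat_eq_average[OF assms(1)]
  using assms by (intro abs_average_le finite_dtuples dtuples_ne) simp_all

lemma eta_hat_fun_upd_diff_le:
  assumes "4 \<le> n" and Hker_le: "\<And>Z i j q r. \<bar>Hker k l Z i j q r\<bar> \<le> Hb"
  shows "\<bar>eta_hat k l n Z - eta_hat k l n (Z(m := y))\<bar> \<le> 8 * Hb / n"
proof -
  have "\<bar>eta_hat k l n Z - eta_hat k l n (Z(m := y))\<bar> \<le> 2 * Hb * (4 / n)"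
    unfolding eta_hat_eq_average[OF assms(1)]
  proof (rule abs_average_diff_le[where P="\<lambda>p. m \<in> set p"])
    show "Hker k l Z (p!0) (p!1) (p!2) (p!3) = Hker k l (Z(m := y)) (p!0) (p!1) (p!2) (p!3)"
      if "p \<in> dtuples 4 {1..n}" "m \<notin> set p" for p
    proof -
      have "length p = 4" using that(1) by (simp add: dtuples_def)
      then have "m \<noteq> p ! a" if "a < 4" for a using \<open>m \<notin> set p\<close> that nth_mem by fastforce
      then show ?thesis by (simp add: Hker_fun_upd)
    qed
  qed (use assms card_dtuples_containing_index in \<open>simp_all add: finite_dtuples dtuples_ne\<close>)
  then show ?thesis by simp
qed

lemma sigma2_pair_mean_fun_upd_diff_le:
  assumes "4 \<le> n" and Hker_le: "\<And>Z i j q r. \<bar>Hker k l Z i j q r\<bar> \<le> Hb"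
  shows "\<bar>sigma2_pair_mean k l n Z - sigma2_pair_mean k l n (Z(m := y))\<bar> \<le> 16 * Hb\<^sup>2 / n"
proof -
  have "0 \<le> Hb" using Hker_le abs_ge_zero order.trans by blast
  have "sigma2_pairs n \<noteq> {}"
    using card_sigma2_pairs[OF assms(1)] falling_pos[of n 4] falling_pos[of "n - 1" 3] by auto
  have product_le: "\<bar>case s of (p, t) \<Rightarrow> Hker k l W (p!0) (p!1) (p!2) (p!3) * Hker k l W (p!0) (t!0) (t!1) (t!2)\<bar>
      \<le> Hb\<^sup>2" for W s
    unfolding power2_eq_square by (cases s) (auto simp: abs_mult \<open>0 \<le> Hb\<close> intro!: mult_mono Hker_le)
  have "\<bar>sigma2_pair_mean k l n Z - sigma2_pair_mean k l n (Z(m := y))\<bar> \<le> 2 * Hb\<^sup>2 * (8 / n)"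
    unfolding sigma2_pair_mean_def
  proof (rule abs_average_diff_le[where P="\<lambda>(p, t). m \<in> set p \<or> m \<in> set t"])
    show "(case s of (p, t) \<Rightarrow> Hker k l Z (p!0) (p!1) (p!2) (p!3) * Hker k l Z (p!0) (t!0) (t!1) (t!2))
        = (case s of (p, t) \<Rightarrow> Hker k l (Z(m := y)) (p!0) (p!1) (p!2) (p!3)
            * Hker k l (Z(m := y)) (p!0) (t!0) (t!1) (t!2))"
      if s_mem: "s \<in> sigma2_pairs n"
        and avoids_m: "\<not> (case s of (p, t) \<Rightarrow> m \<in> set p \<or> m \<in> set t)" for s
    proof -
      obtain p t where s: "s = (p, t)" by (cases s)
      with s_mem have "length p = 4" "length t = 3" by (auto simp: sigma2_pairs_def dtuples_def)
      then have "m \<noteq> p ! a" if "a < 4" for a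
        using avoids_m s that nth_mem by fastforce
      moreover have "m \<noteq> t ! b" if "b < 3" for b
        using avoids_m s that \<open>length t = 3\<close> nth_mem by fastforce
      ultimately show ?thesis unfolding s by (simp add: Hker_fun_upd)
    qed
  qed (use product_le card_sigma2_pairs_containing[OF assms(1)] \<open>sigma2_pairs n \<noteq> {}\<close> in
        \<open>simp_all add: finite_sigma2_pairs case_prod_beta'\<close>)
  then show ?thesis by simp
qed

lemma sigma2_hat_fun_upd_diff_le:
  assumes "4 \<le> n" and Hker_le: "\<And>Z i j q r. \<bar>Hker k l Z i j q r\<bar> \<le> Hb"
  shows "\<bar>sigma2_hat k l n Z - sigma2_hat k l n (Z(m := y))\<bar> \<le> 512 * Hb\<^sup>2 / n"
proof -
  define u where "u W = sigma2_pair_mean k l n W" for W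
  define v where "v W = eta_hat k l n W" for W
  define Z' where "Z' = Z(m := y)"
  have "0 \<le> Hb" using Hker_le abs_ge_zero order.trans by blast
  have "sigma2_hat k l n Z - sigma2_hat k l n Z' = 16 * ((u Z - u Z') - (v Z - v Z') * (v Z + v Z'))"
    unfolding sigma2_hat_eq[OF assms(1)] u_def v_def by (simp add: power2_eq_square algebra_simps)
  then have "\<bar>sigma2_hat k l n Z - sigma2_hat k l n Z'\<bar>
      = 16 * \<bar>(u Z - u Z') - (v Z - v Z') * (v Z + v Z')\<bar>"
    by (simp only: abs_mult abs_numeral)
  also have "\<dots> \<le> 16 * (\<bar>u Z - u Z'\<bar> + \<bar>v Z - v Z'\<bar> * (\<bar>v Z\<bar> + \<bar>v Z'\<bar>))"
    by (intro mult_left_mono order.trans[OF abs_triangle_ineq4] add_left_mono)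
      (simp_all add: abs_mult mult_left_mono abs_triangle_ineq)
  also have "\<dots> \<le> 16 * (16 * Hb\<^sup>2 / n + 8 * Hb / n * (Hb + Hb))"
    unfolding u_def v_def Z'_def
    using sigma2_pair_mean_fun_upd_diff_le[OF assms] eta_hat_fun_upd_diff_le[OF assms]
      abs_eta_hat_le[OF assms] assms(1) \<open>0 \<le> Hb\<close>
    by (intro mult_left_mono add_mono mult_mono) simp_all
  also have "\<dots> = 512 * Hb\<^sup>2 / n"
    by (simp add: power2_eq_square field_simps)
  finally show ?thesis unfolding Z'_def .
qed

lemma divide_mult_sqrt_half:
  fixes a x L :: real
  assumes "0 < x"
  shows "a / x * sqrt (x / 2 * L) = a / 2 * sqrt (2 / x * L)"
proof -
  have "x / 2 * L = (x / 2)\<^sup>2 * (2 / x * L)"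
    using assms by (simp add: power2_eq_square)
  then have "sqrt (x / 2 * L) = x / 2 * sqrt (2 / x * L)"
    using assms by (simp only: real_sqrt_mult real_sqrt_abs abs_of_pos half_gt_zero)
  then have "a / x * sqrt (x / 2 * L) = a / x * (x / 2) * sqrt (2 / x * L)"
    by (simp only: mult.assoc)
  then show ?thesis using assms by simp
qed

theorem lemma8:
  fixes M :: "('x \<times> 'y) measure"
    and k :: "'x \<Rightarrow> 'x \<Rightarrow> real" and l :: "'y \<Rightarrow> 'y \<Rightarrow> real"
    and \<nu>k \<nu>l \<delta> :: real and n :: nat
  assumes "prob_space M"
    and "pd_kernel k" and "pd_kernel l"
    and "(\<lambda>(z, z'). k (fst z) (fst z')) \<in> borel_measurable (M \<Otimes>\<^sub>M M)"
    and "(\<lambda>(z, z'). l (snd z) (snd z')) \<in> borel_measurable (M \<Otimes>\<^sub>M M)"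
    and "\<forall>x. k x x \<le> \<nu>k" and "\<forall>y. l y y \<le> \<nu>l"
    and "4 \<le> n" and "0 < \<delta>" and "\<delta> < 1"
  shows "prob_space.prob (\<Pi>\<^sub>M i\<in>{1..n}. M)
           {Z \<in> space (\<Pi>\<^sub>M i\<in>{1..n}. M).
              \<bar>sigma2_hat k l n Z - prob_space.expectation (\<Pi>\<^sub>M i\<in>{1..n}. M) (sigma2_hat k l n)\<bar>
                \<le> 6144 * \<nu>k\<^sup>2 * \<nu>l\<^sup>2 * sqrt (2 / real n * ln (2 / \<delta>))}
         \<ge> 1 - \<delta>"
proof -
  let ?P = "PiM {1..n} (\<lambda>_. M)"
  interpret P: prob_space ?P by (rule prob_space_PiM) (rule assms(1))
  define dev where "dev Z = \<bar>sigma2_hat k l n Z - (\<integral>Z. sigma2_hat k l n Z \<partial>?P)\<bar>" for Z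
  define V where "V = \<nu>k\<^sup>2 * \<nu>l\<^sup>2"
  define L where "L = ln (2 / \<delta>)"
  have "\<bar>Hker k l Z i j q r\<bar> \<le> 4 * \<nu>k * \<nu>l" for Z i j q r
    by (rule abs_Hker_le[OF assms(2,3,6,7)])
  from sigma2_hat_fun_upd_diff_le[OF assms(8) this]
  have "has_bounded_differences M {1..n} (sigma2_hat k l n) (8192 * V / n)"
    unfolding has_bounded_differences_def V_def by (simp add: power_mult_distrib mult.assoc)
  from mcdiarmid_inequality[OF assms(1) finite_atLeastAtMost assms(9) _
      measurable_sigma2_hat[OF assms(4,5)] this] assms(10)
  have "1 - \<delta> \<le> measure ?P {Z \<in> space ?P. dev Z \<le> 8192 * V / n * sqrt (n / 2 * L)}"
    unfolding dev_def L_def by simp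
  also have "\<dots> \<le> measure ?P {Z \<in> space ?P. dev Z \<le> 6144 * V * sqrt (2 / n * L)}"
  proof (rule P.finite_measure_mono)
    have "8192 * V / n * sqrt (n / 2 * L) \<le> 6144 * V * sqrt (2 / n * L)"
      using divide_mult_sqrt_half[of n "8192 * V" L] assms(8-10)
      by (simp add: V_def L_def mult_right_mono)
    then show "{Z \<in> space ?P. dev Z \<le> 8192 * V / n * sqrt (n / 2 * L)}
        \<subseteq> {Z \<in> space ?P. dev Z \<le> 6144 * V * sqrt (2 / n * L)}" by auto
    show "{Z \<in> space ?P. dev Z \<le> 6144 * V * sqrt (2 / n * L)} \<in> sets ?P"
      unfolding dev_def using measurable_sigma2_hat[OF assms(4,5)] by measurable
  qed
  finally show ?thesis unfolding dev_def V_def L_def by (simp add: mult.assoc)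
qed

end
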